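(* Let $\Omega\subseteq\mathbb R^N$ be open, $u\in\widetilde W^{s,p}_{loc}(\Omega)$ and $f\in L^1_{loc}(\Omega)$. For each $\varepsilon>0$ let $A_\varepsilon\subset\mathbb R^N\times\mathbb R^N$ be a neighborhood of the diagonal $\mathbf D=\{(x,x):x\in\mathbb R^N\}$ such that (i) $(y,x)\in A_\varepsilon$ whenever $(x,y)\in A_\varepsilon$, and (ii) the Hausdorff distance between $A_\varepsilon$ and $\mathbf D$ tends to $0$ as $\varepsilon\to0^+$. Set $A_\varepsilon(x)=\{y:(x,y)\in A_\varepsilon\}$ and $$g_\varepsilon(x)=\int_{\mathbb R^N\setminus A_\varepsilon(x)}\frac{(u(x)-u(y))^{p-1}}{|x-y|^{N+ps}}\,dy.$$ If $2g_\varepsilon\to f$ in $L^1_{loc}(\Omega)$ as $\varepsilon\to0^+$, then for every $\varphi\in C^\infty_c(\Omega)$ $$\int_{\mathbb R^N\times\mathbb R^N}\frac{(u(x)-u(y))^{p-1}(\varphi(x)-\varphi(y))}{|x-y|^{N+ps}}dxdy=\int_\Omega f\varphi\,dx,$$ i.e. $u$ is a weak solution of $(-\Delta)^s_pu=f$ in $\Omega$.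
   Context: Fixed $s\in(0,1)$, $p\in(1,\infty)$. $a^q:=|a|^{q-1}a$. For open $U$, $W^{s,p}(U)$ is the fractional Sobolev space with norm $\|u\|_{L^p(U)}+(\int_{U\times U}\frac{|u(x)-u(y)|^p}{|x-y|^{N+ps}})^{1/p}$. For bounded open $\Omega'$, $\widetilde W^{s,p}(\Omega')$ is the set of $u\in L^p_{loc}(\mathbb R^N)$ for which some bounded open $U\supset\overline{\Omega'}$ has $u\in W^{s,p}(U)$ and $\int_{\mathbb R^N}\frac{|u|^{p-1}}{(1+|x|)^{N+ps}}dx<\infty$; $\widetilde W^{s,p}_{loc}(\Omega)$ is the set of $u$ lying in $\widetilde W^{s,p}(\Omega')$ for every bounded open $\Omega'\subseteq\Omega$. Hausdorff distance: $\mathrm{dist}_H(A,B)=\max\{\sup_{x\in A}\mathrm{dist}(x,B),\sup_{y\in B}\mathrm{dist}(y,A)\}$. *)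

theory Defs
  imports "HOL-Analysis.Analysis"
begin

text \<open>Signed power a^q := |a|^(q-1) a = sgn a * |a| powr q.\<close>
definition spow :: "real \<Rightarrow> real \<Rightarrow> real" where
  "spow a q = sgn a * \<bar>a\<bar> powr q"

definition smooth_fun :: "('a::euclidean_space \<Rightarrow> real) \<Rightarrow> bool" where
  "smooth_fun f \<longleftrightarrow> (\<exists>S. f \<in> S \<and> (\<forall>g\<in>S. continuous_on UNIV g \<and>
      (\<forall>i\<in>Basis. \<exists>g'\<in>S. \<forall>x. ((\<lambda>t. g (x + t *\<^sub>R i)) has_real_derivative g' x) (at 0))))"

definition test_fun :: "'a::euclidean_space set \<Rightarrow> ('a \<Rightarrow> real) \<Rightarrow> bool" where
  "test_fun \<Omega> \<phi> \<longleftrightarrow> smooth_fun \<phi> \<and> compact (closure {x. \<phi> x \<noteq> 0})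
      \<and> closure {x. \<phi> x \<noteq> 0} \<subseteq> \<Omega>"

definition Lp_loc :: "real \<Rightarrow> ('a::euclidean_space \<Rightarrow> real) \<Rightarrow> bool" where
  "Lp_loc p u \<longleftrightarrow> u \<in> borel_measurable lebesgue \<and>
     (\<forall>K. compact K \<longrightarrow> (\<integral>\<^sup>+x\<in>K. ennreal (\<bar>u x\<bar> powr p) \<partial>lebesgue) < \<infinity>)"

definition in_Wsp :: "real \<Rightarrow> real \<Rightarrow> 'a::euclidean_space set \<Rightarrow> ('a \<Rightarrow> real) \<Rightarrow> bool" where
  "in_Wsp s p U u \<longleftrightarrow> set_borel_measurable lebesgue U u \<and>
     (\<integral>\<^sup>+x\<in>U. ennreal (\<bar>u x\<bar> powr p) \<partial>lebesgue) < \<infinity> \<and>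
     (\<integral>\<^sup>+z\<in>U \<times> U. ennreal (\<bar>u (fst z) - u (snd z)\<bar> powr p /
         norm (fst z - snd z) powr (real DIM('a) + p * s)) \<partial>(lebesgue \<Otimes>\<^sub>M lebesgue)) < \<infinity>"

definition tW :: "real \<Rightarrow> real \<Rightarrow> 'a::euclidean_space set \<Rightarrow> ('a \<Rightarrow> real) \<Rightarrow> bool" where
  "tW s p \<Omega>' u \<longleftrightarrow> Lp_loc p u \<and>
     (\<exists>U. open U \<and> bounded U \<and> closure \<Omega>' \<subseteq> U \<and> in_Wsp s p U u) \<and>
     (\<integral>\<^sup>+x. ennreal (\<bar>u x\<bar> powr (p - 1) / (1 + norm x) powr (real DIM('a) + p * s)) \<partial>lebesgue) < \<infinity>"

definition tW_loc :: "real \<Rightarrow> real \<Rightarrow> 'a::euclidean_space set \<Rightarrow> ('a \<Rightarrow> real) \<Rightarrow> bool" where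
  "tW_loc s p \<Omega> u \<longleftrightarrow> (\<forall>\<Omega>'. open \<Omega>' \<and> bounded \<Omega>' \<and> \<Omega>' \<subseteq> \<Omega> \<longrightarrow> tW s p \<Omega>' u)"

definition L1_loc :: "'a::euclidean_space set \<Rightarrow> ('a \<Rightarrow> real) \<Rightarrow> bool" where
  "L1_loc \<Omega> f \<longleftrightarrow> (\<forall>K. compact K \<and> K \<subseteq> \<Omega> \<longrightarrow> set_integrable lebesgue K f)"

definition L1_loc_tendsto :: "'a::euclidean_space set \<Rightarrow> (real \<Rightarrow> 'a \<Rightarrow> real) \<Rightarrow> ('a \<Rightarrow> real) \<Rightarrow> bool" where
  "L1_loc_tendsto \<Omega> G f \<longleftrightarrow> (\<forall>K. compact K \<and> K \<subseteq> \<Omega> \<longrightarrow>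
      (\<forall>\<^sub>F \<epsilon> in at_right 0. set_integrable lebesgue K (G \<epsilon>)) \<and>
      ((\<lambda>\<epsilon>. LINT x:K|lebesgue. \<bar>G \<epsilon> x - f x\<bar>) \<longlongrightarrow> 0) (at_right 0))"

definition hausdist_ext :: "'b::metric_space set \<Rightarrow> 'b set \<Rightarrow> ereal" where
  "hausdist_ext A B = max (SUP x\<in>A. ereal (infdist x B)) (SUP y\<in>B. ereal (infdist y A))"

definition diag :: "('a \<times> 'a) set" where
  "diag = {(x, x) | x. True}"

end

(*
  The weak form is the limit of truncated integrals. Off a symmetric neighbourhood A of the
  diagonal, the antisymmetry of the kernel (u x - u y)^(p-1) / |x - y|^(N+ps) under swapping
  x and y turns the factor phi x - phi y into 2 phi x, and Fubini identifies the truncated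
  double integral with the integral of phi times 2 g_eps, which tends to the integral of f phi
  by the L^1_loc convergence. The full integrand is integrable: near the diagonal by the
  Gagliardo seminorm of u together with the Lipschitz bound on phi (Young's inequality), far
  from it by the tail condition on u. Since the Hausdorff distance of A_eps to the diagonal
  vanishes, dominated convergence lets the truncated integrals tend to the full one.
*)

theory Submission
  imports Defs
begin

lemma borel_measurable_lebesgueI:
  "f \<in> borel_measurable (borel :: 'a::euclidean_space measure) \<Longrightarrow> f \<in> borel_measurable lebesgue"
  by (rule measurable_completion) simp

lemma borel_measurable_lebesgue_id [measurable]:
  "(\<lambda>x::'a::euclidean_space. x) \<in> borel_measurable lebesgue"
  by (rule borel_measurable_lebesgueI) simp

lemma sigma_finite_lebesgue: "sigma_finite_measure (lebesgue :: 'a::euclidean_space measure)"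
proof
  let ?B = "range (\<lambda>n::nat. cball (0::'a) (real n))"
  show "\<exists>A. countable A \<and> A \<subseteq> sets (lebesgue::'a measure) \<and> \<Union> A = space lebesgue
          \<and> (\<forall>a\<in>A. emeasure lebesgue a \<noteq> \<infinity>)"
    by (intro exI[of _ ?B]) (auto simp: real_arch_simple emeasure_cball)
qed

interpretation lebesgue: sigma_finite_measure "lebesgue :: 'a::euclidean_space measure"
  by (rule sigma_finite_lebesgue)

interpretation lebesgue_pair: pair_sigma_finite "lebesgue :: 'a::euclidean_space measure" lebesgue ..

lemma nn_integral_lebesgue_fst_times_snd:
  fixes f g :: "'a::euclidean_space \<Rightarrow> real"
  assumes [measurable]: "f \<in> borel_measurable lebesgue" "g \<in> borel_measurable lebesgue"
    and "\<And>x. 0 \<le> f x" "\<And>x. 0 \<le> g x"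
  shows "(\<integral>\<^sup>+z. ennreal (f (fst z) * g (snd z)) \<partial>(lebesgue \<Otimes>\<^sub>M lebesgue))
      = (\<integral>\<^sup>+x. ennreal (f x) \<partial>lebesgue) * (\<integral>\<^sup>+y. ennreal (g y) \<partial>lebesgue)"
proof -
  have "(\<integral>\<^sup>+z. ennreal (f (fst z) * g (snd z)) \<partial>(lebesgue \<Otimes>\<^sub>M lebesgue))
     = (\<integral>\<^sup>+x. ennreal (f x) * (\<integral>\<^sup>+y. ennreal (g y) \<partial>lebesgue) \<partial>lebesgue)"
    using assms by (simp add: lebesgue.nn_integral_fst[symmetric] ennreal_mult nn_integral_cmult)
  then show ?thesis
    by (simp add: nn_integral_multc)
qed

lemma integrable_lebesgue_fst_times_snd:
  fixes f g :: "'a::euclidean_space \<Rightarrow> real"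
  assumes [measurable]: "f \<in> borel_measurable lebesgue" "g \<in> borel_measurable lebesgue"
    and "\<And>x. 0 \<le> f x" "\<And>x. 0 \<le> g x"
    and "(\<integral>\<^sup>+x. ennreal (f x) \<partial>lebesgue) < \<infinity>" "(\<integral>\<^sup>+y. ennreal (g y) \<partial>lebesgue) < \<infinity>"
  shows "integrable (lebesgue \<Otimes>\<^sub>M lebesgue) (\<lambda>z. f (fst z) * g (snd z))"
  using assms
  by (intro integrableI_nonneg)
     (auto simp: nn_integral_lebesgue_fst_times_snd ennreal_mult_less_top)

lemma nn_integral_indicator_times:
  "(\<integral>\<^sup>+x. ennreal (indicator K x * v x) \<partial>M) = (\<integral>\<^sup>+x\<in>K. ennreal (v x) \<partial>M)"
  by (intro nn_integral_cong) (simp add: indicator_def)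

lemma integrable_abs_le:
  fixes f g :: "'a \<Rightarrow> real"
  assumes g: "integrable M g" and f: "f \<in> borel_measurable M" and le: "\<And>x. \<bar>f x\<bar> \<le> g x"
  shows "integrable M f"
proof (rule Bochner_Integration.integrable_bound[OF g f])
  show "AE x in M. norm (f x) \<le> norm (g x)"
    using le by (intro AE_I2) (force intro: order_trans abs_ge_self)
qed

lemma integrable_bounded_mult:
  fixes \<phi> h :: "'a \<Rightarrow> real"
  assumes h: "integrable M h" and \<phi>: "\<phi> \<in> borel_measurable M" "\<And>x. \<bar>\<phi> x\<bar> \<le> C"
  shows "integrable M (\<lambda>x. \<phi> x * h x)"
proof (rule integrable_abs_le)
  show "integrable M (\<lambda>x. C * \<bar>h x\<bar>)" using h by auto
  show "(\<lambda>x. \<phi> x * h x) \<in> borel_measurable M" using \<phi>(1) borel_measurable_integrable[OF h] by simp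
  show "\<bar>\<phi> x * h x\<bar> \<le> C * \<bar>h x\<bar>" for x using \<phi>(2)[of x] by (simp add: abs_mult mult_right_mono)
qed

lemma abs_integral_bounded_mult_le:
  fixes \<phi> h :: "'a \<Rightarrow> real"
  assumes h: "integrable M h" and \<phi>: "\<phi> \<in> borel_measurable M" "\<And>x. \<bar>\<phi> x\<bar> \<le> C"
  shows "\<bar>\<integral>x. \<phi> x * h x \<partial>M\<bar> \<le> C * (\<integral>x. \<bar>h x\<bar> \<partial>M)"
proof -
  have "\<bar>\<integral>x. \<phi> x * h x \<partial>M\<bar> \<le> (\<integral>x. \<bar>\<phi> x * h x\<bar> \<partial>M)"
    by (rule integral_abs_bound)
  also have "\<dots> \<le> (\<integral>x. C * \<bar>h x\<bar> \<partial>M)"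
  proof (rule integral_mono)
    show "integrable M (\<lambda>x. \<bar>\<phi> x * h x\<bar>)" using integrable_bounded_mult[OF assms] by (rule integrable_abs)
    show "integrable M (\<lambda>x. C * \<bar>h x\<bar>)" using h by auto
    show "\<bar>\<phi> x * h x\<bar> \<le> C * \<bar>h x\<bar>" for x using \<phi>(2)[of x] by (simp add: abs_mult mult_right_mono)
  qed
  finally show ?thesis by simp
qed

lemma powr_pred_mult_le_powr_add:
  fixes \<alpha> \<beta> q :: real
  assumes "0 \<le> \<alpha>" "0 \<le> \<beta>" "1 < q"
  shows "\<alpha> powr (q - 1) * \<beta> \<le> \<alpha> powr q + \<beta> powr q"
proof (cases "\<beta> \<le> \<alpha>")
  case True
  show ?thesis
  proof (cases "\<alpha> = 0")
    case False
    have "\<alpha> powr (q - 1) * \<beta> \<le> \<alpha> powr (q - 1) * \<alpha>" using True assms by (intro mult_left_mono) auto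
    also have "\<dots> = \<alpha> powr q" using False assms by (simp add: powr_diff)
    finally show ?thesis by (smt (verit) powr_ge_zero)
  qed (use assms in simp)
next
  case False
  then have "\<alpha> powr (q - 1) * \<beta> \<le> \<beta> powr (q - 1) * \<beta>" using assms by (intro mult_right_mono powr_mono2) auto
  also have "\<dots> = \<beta> powr q" using False assms by (simp add: powr_diff)
  finally show ?thesis by (smt (verit) powr_ge_zero)
qed

lemma abs_diff_powr_le:
  fixes a b q :: real
  assumes "0 < q"
  shows "\<bar>a - b\<bar> powr q \<le> 2 powr q * (\<bar>a\<bar> powr q + \<bar>b\<bar> powr q)"
proof -
  have "\<bar>a - b\<bar> powr q \<le> (2 * max \<bar>a\<bar> \<bar>b\<bar>) powr q" using assms by (intro powr_mono2) auto
  also have "\<dots> = 2 powr q * max \<bar>a\<bar> \<bar>b\<bar> powr q" by (simp add: powr_mult)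
  also have "max \<bar>a\<bar> \<bar>b\<bar> powr q \<le> \<bar>a\<bar> powr q + \<bar>b\<bar> powr q" by (simp add: max_def)
  finally show ?thesis by simp
qed

lemma powr_pred_le_one_plus_powr:
  fixes x p :: real
  assumes "1 < p" "0 \<le> x"
  shows "x powr (p - 1) \<le> 1 + x powr p"
proof (cases "x \<le> 1")
  case True
  then have "x powr (p - 1) \<le> 1 powr (p - 1)" using assms by (intro powr_mono2) auto
  then show ?thesis by (smt (verit) powr_ge_zero powr_one_eq_one)
next
  case False
  then have "x powr (p - 1) \<le> x powr p" using assms by (intro powr_mono) auto
  then show ?thesis by linarith
qed

lemma inverse_norm_diff_powr_le_weight:
  fixes x y :: "'a::real_normed_vector"
  assumes "norm x \<le> R" "0 < r" "r \<le> norm (x - y)" "0 \<le> a"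
  shows "1 / norm (x - y) powr a \<le> ((1 + R) / r + 1) powr a / (1 + norm y) powr a"
proof -
  define d where "d = norm (x - y)"
  have d: "0 < d" "r \<le> d" using assms unfolding d_def by auto
  have "1 + norm y \<le> 1 + norm x + d"
    unfolding d_def using norm_triangle_ineq3[of x y] by (simp add: norm_minus_commute)
  also have "\<dots> \<le> ((1 + R) / r + 1) * d"
  proof -
    have "0 \<le> R" using assms(1) norm_ge_zero[of x] by linarith
    then have "(1 + R) * r \<le> (1 + R) * d" using d by (intro mult_left_mono) auto
    then have "1 + R \<le> (1 + R) / r * d" using assms by (simp add: field_simps)
    then show ?thesis using assms by (simp add: algebra_simps)
  qed
  finally have "(1 + norm y) powr a \<le> (((1 + R) / r + 1) * d) powr a"
    using assms by (intro powr_mono2) auto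
  also have "\<dots> = ((1 + R) / r + 1) powr a * d powr a"
    using assms d norm_ge_zero[of x] by (simp add: powr_mult)
  finally have "(1 + norm y) powr a \<le> ((1 + R) / r + 1) powr a * d powr a" .
  moreover have "0 < 1 + norm y"
    using norm_ge_zero[of y] by linarith
  ultimately show ?thesis
    using d by (simp add: d_def[symmetric] field_simps del: norm_ge_zero)
qed

section \<open>Integrability of powers of the distance\<close>

lemma ennreal_le_suminf: "(f :: nat \<Rightarrow> ennreal) n \<le> suminf f"
  using sum_le_suminf[of f "{n}"] by simp

lemma nn_integral_le_suminf_cball:
  fixes x0 :: "'a::euclidean_space" and f :: "'a \<Rightarrow> real"
  assumes c: "\<And>k. 0 \<le> c k" and r: "\<And>k. 0 \<le> r k"
    and f: "\<And>y. \<exists>k. f y \<le> c k * indicator (cball x0 (r k)) y"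
  shows "(\<integral>\<^sup>+y. ennreal (f y) \<partial>lebesgue) \<le> (\<Sum>k. ennreal (c k * (unit_ball_vol DIM('a) * r k ^ DIM('a))))"
proof -
  have [measurable]: "cball x0 (r k) \<in> sets lebesgue" for k
    using lmeasurable_cball fmeasurableD by blast
  have "(\<integral>\<^sup>+y. ennreal (f y) \<partial>lebesgue) \<le> (\<integral>\<^sup>+y. (\<Sum>k. ennreal (c k) * indicator (cball x0 (r k)) y) \<partial>lebesgue)"
  proof (rule nn_integral_mono)
    fix y :: 'a
    obtain k where k: "f y \<le> c k * indicator (cball x0 (r k)) y" using f by blast
    have "ennreal (f y) \<le> ennreal (c k) * indicator (cball x0 (r k)) y"
      using k c[of k] by (cases "y \<in> cball x0 (r k)") (auto simp: ennreal_leI ennreal_neg)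
    also have "\<dots> \<le> (\<Sum>k. ennreal (c k) * indicator (cball x0 (r k)) y)"
      by (rule ennreal_le_suminf)
    finally show "ennreal (f y) \<le> (\<Sum>k. ennreal (c k) * indicator (cball x0 (r k)) y)" .
  qed
  also have "\<dots> = (\<Sum>k. \<integral>\<^sup>+y. ennreal (c k) * indicator (cball x0 (r k)) y \<partial>lebesgue)"
    by (rule nn_integral_suminf) measurable
  also have "\<dots> = (\<Sum>k. ennreal (c k * (unit_ball_vol DIM('a) * r k ^ DIM('a))))"
    using c r by (simp add: nn_integral_cmult_indicator emeasure_cball ennreal_mult mult.assoc)
  finally show ?thesis .
qed

lemma suminf_geometric_ennreal_less_top:
  assumes "0 \<le> A" "0 \<le> q" "q < 1"
  shows "(\<Sum>k. ennreal (A * q ^ k)) < \<infinity>"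
proof -
  have "summable (\<lambda>k. A * q ^ k)" using assms by (intro summable_mult summable_geometric) auto
  then show ?thesis using assms by (simp add: ennreal_suminf_neq_top less_top)
qed

lemma dyadic_shell_below:
  fixes t D :: real
  assumes t: "0 < t" "t \<le> D"
  obtains k :: nat where "t \<le> D * 2 powr (- real k)" "D * 2 powr (- (real k + 1)) < t"
proof -
  define l where "l = log 2 (D / t)"
  define k where "k = nat \<lfloor>l\<rfloor>"
  have "0 \<le> l" unfolding l_def using t by simp
  then have kl: "real k \<le> l" "l < real k + 1" unfolding k_def by linarith+
  have Dt: "D / t = 2 powr l" unfolding l_def using t by simp
  have "2 powr real k \<le> D / t" unfolding Dt using kl by simp
  then have "t \<le> D * 2 powr (- real k)" using t by (simp add: powr_minus field_simps)
  moreover have "D * 2 powr (- (real k + 1)) = D / 2 powr (real k + 1)"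
    by (simp only: powr_minus divide_inverse)
  moreover have "D / t < 2 powr (real k + 1)" unfolding Dt using kl by simp
  then have "D / 2 powr (real k + 1) < t" using t by (simp add: pos_divide_less_eq mult.commute)
  ultimately show ?thesis using that by simp
qed

lemma dyadic_shell_above:
  fixes t :: real
  assumes t: "1 \<le> t"
  obtains k :: nat where "t \<le> 2 powr real k" "2 powr (real k - 1) \<le> t"
proof -
  define k where "k = nat \<lceil>log 2 t\<rceil>"
  have "0 \<le> log 2 t" using t by simp
  then have kl: "log 2 t \<le> real k" "real k < log 2 t + 1"
    unfolding k_def by linarith+
  have "t = 2 powr log 2 t" using t by simp
  also have "\<dots> \<le> 2 powr real k" using kl by simp
  finally have "t \<le> 2 powr real k" .
  moreover have "2 powr real k < 2 powr (log 2 t + 1)" using kl by simp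
  then have "2 powr (real k - 1) \<le> t" using t by (simp add: powr_add powr_diff)
  ultimately show ?thesis using that by blast
qed

text \<open>Both integrability estimates below cover the integration domain by dyadic balls
  centred at the singularity, on each of which the integrand is bounded by a constant; the
  resulting series is geometric.\<close>

lemma nn_integral_cball_norm_powr_neg_bounded:
  fixes D e :: real
  assumes D: "0 < D" and e: "- real DIM('a) < e" "e < 0"
  obtains C where "C < \<infinity>"
    "\<And>x::'a::euclidean_space. (\<integral>\<^sup>+y. ennreal (indicator (cball x D) y * norm (x - y) powr e) \<partial>lebesgue) \<le> C"
proof -
  define N where "N = real DIM('a)"
  define V where "V = unit_ball_vol N"
  define c where "c k = D powr e * 2 powr (- (real k + 1) * e)" for k :: nat
  define r where "r k = D * 2 powr (- real k)" for k :: nat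
  have geom: "c k * (V * r k ^ DIM('a)) = (V * D ^ DIM('a) * D powr e * 2 powr (-e)) * (2 powr (- (e + N))) ^ k" for k
  proof -
    have "(2::real) powr (- (real k + 1) * e) * (2 powr (- real k)) ^ DIM('a)
        = 2 powr (- (real k + 1) * e) * 2 powr (real DIM('a) * (- real k))"
      by (simp add: powr_power)
    also have "\<dots> = 2 powr (-e) * 2 powr (real k * (- (e + N)))"
      unfolding powr_add[symmetric] N_def by (simp add: algebra_simps)
    also have "\<dots> = 2 powr (-e) * (2 powr (- (e + N))) ^ k"
      by (simp add: powr_power)
    finally show ?thesis
      unfolding c_def r_def power_mult_distrib by (simp add: ac_simps)
  qed
  have "(2::real) powr (- (e + N)) < 2 powr 0" using e by (intro powr_less_mono) (auto simp: N_def)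
  then have fin: "(\<Sum>k. ennreal (c k * (V * r k ^ DIM('a)))) < \<infinity>"
    unfolding geom using D by (intro suminf_geometric_ennreal_less_top) (auto simp: V_def N_def)
  have "(\<integral>\<^sup>+y. ennreal (indicator (cball x D) y * norm (x - y) powr e) \<partial>lebesgue)
       \<le> (\<Sum>k. ennreal (c k * (V * r k ^ DIM('a))))" for x :: 'a
    unfolding V_def N_def
  proof (rule nn_integral_le_suminf_cball)
    show "0 \<le> c k" "0 \<le> r k" for k unfolding c_def r_def using D by auto
    fix y :: 'a
    show "\<exists>k. indicator (cball x D) y * norm (x - y) powr e \<le> c k * indicator (cball x (r k)) y"
    proof (cases "y \<in> cball x D \<and> y \<noteq> x")
      case False
      then show ?thesis by (intro exI[of _ 0]) (auto simp: indicator_def c_def)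
    next
      case True
      define t where "t = norm (x - y)"
      have t: "0 < t" "t \<le> D" using True by (auto simp: t_def dist_norm)
      obtain k where k: "t \<le> r k" "D * 2 powr (- (real k + 1)) < t"
        using dyadic_shell_below[OF t] unfolding r_def by blast
      have "t powr e \<le> (D * 2 powr (- (real k + 1))) powr e"
        using k(2) e D by (intro powr_mono2') auto
      also have "\<dots> = c k" unfolding c_def using D by (simp add: powr_mult powr_powr)
      finally show ?thesis using True k(1)
        by (intro exI[of _ k]) (auto simp: t_def dist_norm indicator_def norm_minus_commute)
    qed
  qed
  then show ?thesis using fin that by blast
qed

lemma nn_integral_cball_norm_powr_bounded:
  fixes D e :: real
  assumes D: "0 < D" and e: "- real DIM('a) < e"
  obtains C where "C < \<infinity>"
    "\<And>x::'a::euclidean_space. (\<integral>\<^sup>+y. ennreal (indicator (cball x D) y * norm (x - y) powr e) \<partial>lebesgue) \<le> C"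
proof (cases "e < 0")
  case True
  then show ?thesis using nn_integral_cball_norm_powr_neg_bounded[OF D e] that by blast
next
  case False
  let ?C = "ennreal (D powr e) * ennreal (unit_ball_vol DIM('a) * D ^ DIM('a))"
  have "(\<integral>\<^sup>+y. ennreal (indicator (cball x D) y * norm (x - y) powr e) \<partial>lebesgue) \<le> ?C" for x :: 'a
  proof -
    have "(\<integral>\<^sup>+y. ennreal (indicator (cball x D) y * norm (x - y) powr e) \<partial>lebesgue)
        \<le> (\<integral>\<^sup>+y. ennreal (D powr e) * indicator (cball x D) y \<partial>lebesgue)"
      using False by (intro nn_integral_mono)
        (auto simp: indicator_def dist_norm ennreal_leI intro!: powr_mono2)
    also have "\<dots> = ?C"
      using D by (simp add: nn_integral_cmult_indicator emeasure_cball)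
    finally show ?thesis .
  qed
  then show ?thesis using that[of ?C] by (simp add: ennreal_mult_less_top)
qed

lemma nn_integral_inverse_one_plus_norm_powr_finite:
  fixes a :: real
  assumes a: "real DIM('a) < a"
  shows "(\<integral>\<^sup>+y. ennreal (1 / (1 + norm y) powr a) \<partial>(lebesgue :: 'a::euclidean_space measure)) < \<infinity>"
proof -
  define N where "N = real DIM('a)"
  define V where "V = unit_ball_vol N"
  define c where "c k = 2 powr ((1 - real k) * a)" for k :: nat
  define r where "r k = 2 powr (real k)" for k :: nat
  have geom: "c k * (V * r k ^ DIM('a)) = (V * 2 powr a) * (2 powr (N - a)) ^ k" for k
  proof -
    have "(2::real) powr ((1 - real k) * a) * (2 powr real k) ^ DIM('a)
        = 2 powr ((1 - real k) * a) * 2 powr (real DIM('a) * real k)"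
      by (simp add: powr_power)
    also have "\<dots> = 2 powr a * 2 powr (real k * (N - a))"
      unfolding powr_add[symmetric] N_def by (simp add: algebra_simps)
    also have "\<dots> = 2 powr a * (2 powr (N - a)) ^ k"
      by (simp add: powr_power)
    finally show ?thesis
      unfolding c_def r_def by (simp add: ac_simps)
  qed
  have "(2::real) powr (N - a) < 2 powr 0" using a by (intro powr_less_mono) (auto simp: N_def)
  then have fin: "(\<Sum>k. ennreal (c k * (V * r k ^ DIM('a)))) < \<infinity>"
    unfolding geom by (intro suminf_geometric_ennreal_less_top) (auto simp: V_def N_def)
  have "(\<integral>\<^sup>+y. ennreal (1 / (1 + norm y) powr a) \<partial>(lebesgue :: 'a measure))
       \<le> (\<Sum>k. ennreal (c k * (V * r k ^ DIM('a))))"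
    unfolding V_def N_def
  proof (rule nn_integral_le_suminf_cball)
    show "0 \<le> c k" "0 \<le> r k" for k unfolding c_def r_def by auto
    fix y :: 'a
    define t where "t = 1 + norm y"
    have t: "1 \<le> t" unfolding t_def by simp
    obtain k where tk: "t \<le> r k" and "2 powr (real k - 1) \<le> t"
      using dyadic_shell_above[OF t] unfolding r_def by blast
    then have "(2 powr (real k - 1)) powr a \<le> t powr a" using a by (intro powr_mono2) (auto simp: N_def)
    then have "1 / t powr a \<le> 1 / (2 powr (real k - 1)) powr a"
      using t by (intro divide_left_mono) auto
    also have "\<dots> = c k"
      unfolding c_def by (simp add: powr_powr powr_minus[symmetric] divide_powr_uminus algebra_simps)
    finally show "\<exists>k. 1 / (1 + norm y) powr a \<le> c k * indicator (cball 0 (r k)) y"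
      using tk by (intro exI[of _ k]) (auto simp: t_def indicator_def)
  qed
  then show ?thesis using fin by (meson le_less_trans)
qed

lemma continuous_vanishing_outside_compact_bounded:
  fixes g :: "'a::topological_space \<Rightarrow> real"
  assumes "continuous_on UNIV g" "compact K" "\<And>x. x \<notin> K \<Longrightarrow> g x = 0"
  obtains B where "0 \<le> B" "\<And>x. \<bar>g x\<bar> \<le> B"
proof -
  have "bounded (g ` K)"
    using assms by (meson compact_continuous_image compact_imp_bounded continuous_on_subset subset_UNIV)
  then obtain B where B: "\<And>x. x \<in> K \<Longrightarrow> \<bar>g x\<bar> \<le> B" by (auto simp: bounded_iff)
  have "\<bar>g x\<bar> \<le> max B 0" for x using B assms(3) by (cases "x \<in> K") fastforce+
  then show ?thesis using that[of "max B 0"] by simp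
qed

lemma smooth_fun_continuous: "smooth_fun \<phi> \<Longrightarrow> continuous_on UNIV \<phi>"
  unfolding smooth_fun_def by blast

lemma lipschitz_along_line:
  fixes \<phi> g :: "'a::euclidean_space \<Rightarrow> real" and i :: 'a
  assumes d: "\<And>x. ((\<lambda>t. \<phi> (x + t *\<^sub>R i)) has_real_derivative g x) (at 0)"
    and B: "\<And>x. \<bar>g x\<bar> \<le> B"
  shows "\<bar>\<phi> (x + t *\<^sub>R i) - \<phi> x\<bar> \<le> B * \<bar>t\<bar>"
proof -
  define h where "h t = \<phi> (x + t *\<^sub>R i)" for t
  have "(h has_real_derivative g (x + z *\<^sub>R i)) (at z within UNIV)" for z
  proof -
    have "((\<lambda>\<tau>. h (\<tau> + z)) has_real_derivative g (x + z *\<^sub>R i)) (at 0)"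
      using d[of "x + z *\<^sub>R i"] unfolding h_def by (simp add: algebra_simps)
    then show ?thesis using DERIV_shift[of h "g (x + z *\<^sub>R i)" 0 z] by simp
  qed
  then have "norm (h t - h 0) \<le> B * norm (t - 0)"
    by (intro field_differentiable_bound[where S=UNIV]) (auto simp: B)
  then show ?thesis unfolding h_def by simp
qed

lemma directional_derivative_vanishing_outside:
  fixes \<phi> :: "'a::euclidean_space \<Rightarrow> real"
  assumes K: "closed K" and \<phi>_supp: "\<And>x. x \<notin> K \<Longrightarrow> \<phi> x = 0" and i: "i \<in> Basis"
    and d: "((\<lambda>t. \<phi> (x + t *\<^sub>R i)) has_real_derivative D) (at 0)" and x: "x \<notin> K"
  shows "D = 0"
proof -
  obtain \<rho> where \<rho>: "\<rho> > 0" "ball x \<rho> \<subseteq> - K"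
    using K x by (meson ComplI open_Compl open_contains_ball)
  have "x + t *\<^sub>R i \<in> ball x \<rho>" if "\<bar>t\<bar> < \<rho>" for t
    using that i by (simp add: dist_norm)
  then have "eventually (\<lambda>t. \<phi> (x + t *\<^sub>R i) = 0) (nhds 0)"
    unfolding eventually_nhds_metric using \<rho> \<phi>_supp by (intro exI[of _ \<rho>]) (auto simp: subset_iff)
  then have "((\<lambda>t. \<phi> (x + t *\<^sub>R i)) has_real_derivative D) (at 0) = ((\<lambda>t. 0) has_real_derivative D) (at 0)"
    by (intro DERIV_cong_ev) auto
  then have "((\<lambda>t::real. 0::real) has_real_derivative D) (at 0)" using d by simp
  then show ?thesis using DERIV_const DERIV_unique by blast
qed

lemma lipschitz_of_coordinatewise_lipschitz:
  fixes \<phi> :: "'a::euclidean_space \<Rightarrow> real"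
  assumes B: "\<And>i. i \<in> Basis \<Longrightarrow> 0 \<le> B i"
    "\<And>i x t. i \<in> Basis \<Longrightarrow> \<bar>\<phi> (x + t *\<^sub>R i) - \<phi> x\<bar> \<le> B i * \<bar>t\<bar>"
  shows "\<bar>\<phi> x - \<phi> y\<bar> \<le> (\<Sum>i\<in>Basis. B i) * norm (x - y)"
proof -
  have steps: "\<bar>\<phi> (x + (\<Sum>i\<in>T. c i *\<^sub>R i)) - \<phi> x\<bar> \<le> (\<Sum>i\<in>T. B i * \<bar>c i\<bar>)"
    if "T \<subseteq> Basis" for T x c
    using that
  proof (induction T arbitrary: x rule: infinite_finite_induct)
    case (insert j T)
    let ?y = "x + (\<Sum>i\<in>T. c i *\<^sub>R i)"
    have "\<bar>\<phi> (x + (\<Sum>i\<in>insert j T. c i *\<^sub>R i)) - \<phi> x\<bar> = \<bar>(\<phi> (?y + c j *\<^sub>R j) - \<phi> ?y) + (\<phi> ?y - \<phi> x)\<bar>"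
      using insert by (simp add: algebra_simps)
    also have "\<dots> \<le> B j * \<bar>c j\<bar> + (\<Sum>i\<in>T. B i * \<bar>c i\<bar>)"
      using B(2)[of j ?y "c j"] insert by (intro order.trans[OF abs_triangle_ineq add_mono]) auto
    also have "\<dots> = (\<Sum>i\<in>insert j T. B i * \<bar>c i\<bar>)" using insert by simp
    finally show ?case .
  qed (use finite_Basis in auto)
  have "\<bar>\<phi> (y + (\<Sum>i\<in>Basis. ((x - y) \<bullet> i) *\<^sub>R i)) - \<phi> y\<bar> \<le> (\<Sum>i\<in>Basis. B i * \<bar>(x - y) \<bullet> i\<bar>)"
    by (rule steps) simp
  also have "\<dots> \<le> (\<Sum>i\<in>Basis. B i * norm (x - y))"
    using B(1) by (intro sum_mono mult_left_mono) (auto simp: Basis_le_norm)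
  finally show ?thesis
    by (simp add: euclidean_representation sum_distrib_right)
qed

lemma smooth_fun_compact_support_lipschitz:
  fixes \<phi> :: "'a::euclidean_space \<Rightarrow> real"
  assumes sm: "smooth_fun \<phi>" and K: "compact K" and \<phi>_supp: "\<And>x. x \<notin> K \<Longrightarrow> \<phi> x = 0"
  obtains L where "0 \<le> L" "\<And>x y. \<bar>\<phi> x - \<phi> y\<bar> \<le> L * norm (x - y)"
proof -
  obtain S where S: "\<phi> \<in> S" "\<And>g. g \<in> S \<Longrightarrow> continuous_on UNIV g \<and>
      (\<forall>i\<in>Basis. \<exists>g'\<in>S. \<forall>x. ((\<lambda>t. g (x + t *\<^sub>R i)) has_real_derivative g' x) (at 0))"
    using sm unfolding smooth_fun_def by blast
  have "\<exists>B. 0 \<le> B \<and> (\<forall>x t. \<bar>\<phi> (x + t *\<^sub>R i) - \<phi> x\<bar> \<le> B * \<bar>t\<bar>)" if i: "i \<in> Basis" for i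
  proof -
    obtain g where g: "g \<in> S" "\<And>x. ((\<lambda>t. \<phi> (x + t *\<^sub>R i)) has_real_derivative g x) (at 0)"
      using S i by blast
    have "continuous_on UNIV g" using S(2)[OF g(1)] by blast
    moreover have "g x = 0" if "x \<notin> K" for x
      using directional_derivative_vanishing_outside[OF compact_imp_closed[OF K] \<phi>_supp i g(2) that] .
    ultimately obtain B where "0 \<le> B" "\<And>x. \<bar>g x\<bar> \<le> B"
      using continuous_vanishing_outside_compact_bounded[of g K] K by blast
    then show ?thesis using lipschitz_along_line[OF g(2)] by blast
  qed
  then obtain B where B: "\<And>i. i \<in> Basis \<Longrightarrow> 0 \<le> B i"
    "\<And>i x t. i \<in> Basis \<Longrightarrow> \<bar>\<phi> (x + t *\<^sub>R i) - \<phi> x\<bar> \<le> B i * \<bar>t\<bar>"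
    by metis
  show ?thesis
  proof
    show "0 \<le> (\<Sum>i\<in>Basis. B i)" using B(1) by (simp add: sum_nonneg)
    show "\<bar>\<phi> x - \<phi> y\<bar> \<le> (\<Sum>i\<in>Basis. B i) * norm (x - y)" for x y
      using B by (rule lipschitz_of_coordinatewise_lipschitz)
  qed
qed

lemma test_fun_properties:
  fixes \<phi> :: "'a::euclidean_space \<Rightarrow> real"
  assumes "test_fun \<Omega> \<phi>"
  obtains K L M where "compact K" "K \<subseteq> \<Omega>" "\<And>x. x \<notin> K \<Longrightarrow> \<phi> x = 0"
    "0 \<le> L" "\<And>x y. \<bar>\<phi> x - \<phi> y\<bar> \<le> L * norm (x - y)" "\<And>x. \<bar>\<phi> x\<bar> \<le> M"
    "\<phi> \<in> borel_measurable lebesgue"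
proof -
  define K where "K = closure {x. \<phi> x \<noteq> 0}"
  have sm: "smooth_fun \<phi>" and K: "compact K" "K \<subseteq> \<Omega>"
    using assms unfolding test_fun_def K_def by auto
  have supp: "\<phi> x = 0" if "x \<notin> K" for x
    using that closure_subset[of "{x. \<phi> x \<noteq> 0}"] unfolding K_def by auto
  have cont: "continuous_on UNIV \<phi>" using sm by (rule smooth_fun_continuous)
  obtain L where "0 \<le> L" "\<And>x y. \<bar>\<phi> x - \<phi> y\<bar> \<le> L * norm (x - y)"
    using smooth_fun_compact_support_lipschitz[OF sm K(1) supp] by blast
  moreover obtain M where "\<And>x. \<bar>\<phi> x\<bar> \<le> M"
    using continuous_vanishing_outside_compact_bounded[OF cont K(1) supp] by blast
  moreover have "\<phi> \<in> borel_measurable lebesgue"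
    using cont by (intro borel_measurable_lebesgueI borel_measurable_continuous_onI)
  ultimately show ?thesis using that K supp by blast
qed

lemma nn_integral_powr_pred_finite:
  fixes u :: "'a \<Rightarrow> real"
  assumes p: "1 < p" and K: "K \<in> sets M" "emeasure M K < \<infinity>"
    and u [measurable]: "u \<in> borel_measurable M"
    and u_Lp: "(\<integral>\<^sup>+x\<in>K. ennreal (\<bar>u x\<bar> powr p) \<partial>M) < \<infinity>"
  shows "(\<integral>\<^sup>+x\<in>K. ennreal (\<bar>u x\<bar> powr (p - 1)) \<partial>M) < \<infinity>"
proof -
  have "ennreal (\<bar>u x\<bar> powr (p - 1)) \<le> 1 + ennreal (\<bar>u x\<bar> powr p)" for x
  proof -
    have "ennreal (\<bar>u x\<bar> powr (p - 1)) \<le> ennreal (1 + \<bar>u x\<bar> powr p)"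
      using powr_pred_le_one_plus_powr[OF p, of "\<bar>u x\<bar>"] by (intro ennreal_leI) simp
    then show ?thesis by (simp add: ennreal_plus)
  qed
  then have "(\<integral>\<^sup>+x\<in>K. ennreal (\<bar>u x\<bar> powr (p - 1)) \<partial>M) \<le> (\<integral>\<^sup>+x\<in>K. 1 + ennreal (\<bar>u x\<bar> powr p) \<partial>M)"
    by (intro nn_integral_mono mult_right_mono) auto
  also have "\<dots> = emeasure M K + (\<integral>\<^sup>+x\<in>K. ennreal (\<bar>u x\<bar> powr p) \<partial>M)"
    using K(1) by (simp add: nn_integral_add distrib_right)
  also have "\<dots> < \<infinity>" using K(2) u_Lp by (simp add: ennreal_add_less_top)
  finally show ?thesis .
qed

lemma tW_loc_on_compact:
  fixes u :: "'a::euclidean_space \<Rightarrow> real"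
  assumes u: "tW_loc s p \<Omega> u" and p: "1 < p" and \<Omega>: "open \<Omega>" and K: "compact K" "K \<subseteq> \<Omega>"
  obtains U where "open U" "bounded U" "K \<subseteq> U" "u \<in> borel_measurable lebesgue"
    "(\<integral>\<^sup>+z\<in>U \<times> U. ennreal (\<bar>u (fst z) - u (snd z)\<bar> powr p /
       norm (fst z - snd z) powr (real DIM('a) + p * s)) \<partial>(lebesgue \<Otimes>\<^sub>M lebesgue)) < \<infinity>"
    "(\<integral>\<^sup>+x\<in>K. ennreal (\<bar>u x\<bar> powr (p - 1)) \<partial>lebesgue) < \<infinity>"
    "(\<integral>\<^sup>+y. ennreal (\<bar>u y\<bar> powr (p - 1) / (1 + norm y) powr (real DIM('a) + p * s)) \<partial>lebesgue) < \<infinity>"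
proof -
  obtain R where "K \<subseteq> ball 0 R" using bounded_subset_ballD[OF compact_imp_bounded[OF K(1)]] by blast
  then have K_sub: "K \<subseteq> \<Omega> \<inter> ball 0 R" using K(2) by blast
  have "tW s p (\<Omega> \<inter> ball 0 R) u"
    using u \<Omega> unfolding tW_loc_def by (meson Int_lower1 bounded_Int bounded_ball open_Int open_ball)
  then obtain U where U: "open U" "bounded U" "closure (\<Omega> \<inter> ball 0 R) \<subseteq> U" "in_Wsp s p U u"
    and Lp: "Lp_loc p u"
    and tail: "(\<integral>\<^sup>+x. ennreal (\<bar>u x\<bar> powr (p - 1) / (1 + norm x) powr (real DIM('a) + p * s)) \<partial>lebesgue) < \<infinity>"
    unfolding tW_def by blast
  have KU: "K \<subseteq> U" using K_sub closure_subset U(3) by blast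
  have u_meas: "u \<in> borel_measurable lebesgue" using Lp unfolding Lp_loc_def by blast
  have gagliardo: "(\<integral>\<^sup>+z\<in>U \<times> U. ennreal (\<bar>u (fst z) - u (snd z)\<bar> powr p /
       norm (fst z - snd z) powr (real DIM('a) + p * s)) \<partial>(lebesgue \<Otimes>\<^sub>M lebesgue)) < \<infinity>"
    using U(4) unfolding in_Wsp_def by blast
  have "(\<integral>\<^sup>+x\<in>K. ennreal (\<bar>u x\<bar> powr (p - 1)) \<partial>lebesgue) < \<infinity>"
  proof (rule nn_integral_powr_pred_finite[OF p _ _ u_meas])
    show "K \<in> sets lebesgue" using K(1) by (simp add: compact_imp_closed)
    show "emeasure lebesgue K < \<infinity>" using lmeasurable_compact[OF K(1)] unfolding fmeasurable_def by blast
    show "(\<integral>\<^sup>+x\<in>K. ennreal (\<bar>u x\<bar> powr p) \<partial>lebesgue) < \<infinity>" using Lp K(1) unfolding Lp_loc_def by blast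
  qed
  then show ?thesis using that[OF U(1,2) KU u_meas gagliardo] tail by blast
qed

section \<open>The fractional kernel\<close>

text \<open>On the diagonal the kernel is \<open>0\<close>, because \<open>0 powr a = 0\<close> and division by \<open>0\<close> yields
  \<open>0\<close>; the truncation argument below relies on the integrand vanishing there.\<close>

definition fractional_kernel :: "real \<Rightarrow> real \<Rightarrow> ('a::real_normed_vector \<Rightarrow> real) \<Rightarrow> 'a \<times> 'a \<Rightarrow> real"
  where "fractional_kernel p a u z = spow (u (fst z) - u (snd z)) (p - 1) / norm (fst z - snd z) powr a"

lemma fractional_kernel_swap: "fractional_kernel p a u (y, x) = - fractional_kernel p a u (x, y)"
  using sgn_minus[of "u x - u y"]
  by (simp add: fractional_kernel_def spow_def norm_minus_commute abs_minus_commute)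

lemma abs_fractional_kernel:
  "\<bar>fractional_kernel p a u (x, y)\<bar> = \<bar>u x - u y\<bar> powr (p - 1) / norm (x - y) powr a"
  by (simp add: fractional_kernel_def spow_def abs_mult)

lemma borel_measurable_fractional_kernel [measurable]:
  assumes [measurable]: "u \<in> borel_measurable lebesgue"
  shows "fractional_kernel p a u \<in> borel_measurable (lebesgue \<Otimes>\<^sub>M lebesgue :: ('a::euclidean_space \<times> 'a) measure)"
  unfolding fractional_kernel_def spow_def by measurable

lemma integrable_far_from_diagonal:
  fixes v :: "'a::euclidean_space \<Rightarrow> real"
  assumes K: "compact K" and r: "0 < r" and a: "real DIM('a) < a"
    and v [measurable]: "v \<in> borel_measurable lebesgue" and v_nonneg: "\<And>x. 0 \<le> v x"
    and v_loc: "(\<integral>\<^sup>+x\<in>K. ennreal (v x) \<partial>lebesgue) < \<infinity>"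
    and v_tail: "(\<integral>\<^sup>+y. ennreal (v y / (1 + norm y) powr a) \<partial>lebesgue) < \<infinity>"
  shows "integrable (lebesgue \<Otimes>\<^sub>M lebesgue) (\<lambda>z. indicator K (fst z) *
           indicator {z. r \<le> norm (fst z - snd z)} z * (v (fst z) + v (snd z)) / norm (fst z - snd z) powr a)"
    (is "integrable _ ?G")
proof -
  have [measurable]: "K \<in> sets lebesgue" using K by (simp add: compact_imp_closed)
  obtain R where R: "\<And>x. x \<in> K \<Longrightarrow> norm x \<le> R"
    using compact_imp_bounded[OF K] by (auto simp: bounded_iff)
  define c where "c = ((1 + R) / r + 1) powr a"
  define w where "w y = 1 / (1 + norm y) powr a" for y :: 'a
  have w_nonneg: "0 \<le> w y" for y unfolding w_def by simp
  have [measurable]: "w \<in> borel_measurable lebesgue" unfolding w_def by measurable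
  have "(\<integral>\<^sup>+x. ennreal (indicator K x) \<partial>lebesgue) = (\<integral>\<^sup>+x. indicator K x \<partial>lebesgue)"
    by (intro nn_integral_cong) (simp add: indicator_def)
  also have "\<dots> = emeasure lebesgue K" by (rule nn_integral_indicator) simp
  also have "\<dots> < \<infinity>" using lmeasurable_compact[OF K] by (simp add: fmeasurable_def)
  finally have K_fin: "(\<integral>\<^sup>+x. ennreal (indicator K x) \<partial>lebesgue) < \<infinity>" .
  have w_fin: "(\<integral>\<^sup>+y. ennreal (w y) \<partial>lebesgue) < \<infinity>"
    unfolding w_def using a by (rule nn_integral_inverse_one_plus_norm_powr_finite)
  define m where "m z = c * (indicator K (fst z) * v (fst z) * w (snd z) + indicator K (fst z) * (v (snd z) * w (snd z)))"
    for z :: "'a \<times> 'a"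
  have "integrable (lebesgue \<Otimes>\<^sub>M lebesgue) (\<lambda>z. (indicator K (fst z) * v (fst z)) * w (snd z))"
    using v_nonneg w_nonneg v_loc w_fin
    by (intro integrable_lebesgue_fst_times_snd) (auto simp: nn_integral_indicator_times)
  moreover have "integrable (lebesgue \<Otimes>\<^sub>M lebesgue) (\<lambda>z. indicator K (fst z) * (v (snd z) * w (snd z)))"
    using v_nonneg w_nonneg v_tail K_fin
    by (intro integrable_lebesgue_fst_times_snd) (auto simp: w_def)
  ultimately have m_int: "integrable (lebesgue \<Otimes>\<^sub>M lebesgue) m"
    unfolding m_def by auto
  show ?thesis
  proof (rule integrable_abs_le[OF m_int])
    show "?G \<in> borel_measurable (lebesgue \<Otimes>\<^sub>M lebesgue)" by measurable
    fix z :: "'a \<times> 'a"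
    obtain x y where z: "z = (x, y)" by (cases z)
    show "\<bar>?G z\<bar> \<le> m z"
    proof (cases "x \<in> K \<and> r \<le> norm (x - y)")
      case True
      then have "1 / norm (x - y) powr a \<le> c * w y"
        using inverse_norm_diff_powr_le_weight[of x R r y a] R r a by (auto simp: c_def w_def)
      then have "(v x + v y) * (1 / norm (x - y) powr a) \<le> (v x + v y) * (c * w y)"
        using v_nonneg by (intro mult_left_mono) auto
      then show ?thesis using True v_nonneg[of x] v_nonneg[of y] by (simp add: z m_def algebra_simps)
    next
      case False
      then have "\<bar>?G z\<bar> = 0" by (auto simp: z)
      moreover have "0 \<le> m z"
        using v_nonneg w_nonneg unfolding m_def by (intro mult_nonneg_nonneg add_nonneg_nonneg) (auto simp: c_def)
      ultimately show ?thesis by linarith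
    qed
  qed
qed

lemma integrable_norm_diff_powr_on_bounded_square:
  fixes U :: "'a::euclidean_space set" and e :: real
  assumes U: "bounded U" "U \<in> sets lebesgue" and e: "- real DIM('a) < e"
  shows "integrable (lebesgue \<Otimes>\<^sub>M lebesgue) (\<lambda>z. indicator (U \<times> U) z * norm (fst z - snd z) powr e)"
proof (rule integrableI_nonneg)
  obtain D where D: "0 < D" "U \<subseteq> cball 0 D"
    using bounded_subset_ballD[OF U(1), of 0] by (metis ball_subset_cball subset_trans)
  have "0 < 2 * D" using D by simp
  obtain C where C: "C < \<infinity>"
    "\<And>x::'a. (\<integral>\<^sup>+y. ennreal (indicator (cball x (2 * D)) y * norm (x - y) powr e) \<partial>lebesgue) \<le> C"
    using nn_integral_cball_norm_powr_bounded[OF \<open>0 < 2 * D\<close> e] by blast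
  have [measurable]: "U \<in> sets lebesgue" "cball x (2 * D) \<in> sets lebesgue" for x
    using U lmeasurable_cball fmeasurableD by blast+
  have [measurable]: "(\<lambda>y. norm (x - y) powr e) \<in> borel_measurable lebesgue" for x :: 'a
    by (rule borel_measurable_lebesgueI) measurable
  have inner: "(\<integral>\<^sup>+y. ennreal (indicator (U \<times> U) (x, y) * norm (x - y) powr e) \<partial>lebesgue)
      \<le> ennreal (indicator U x) * C" for x
  proof -
    have "dist x y \<le> 2 * D" if "x \<in> U" "y \<in> U" for y
    proof -
      have "norm x \<le> D" "norm y \<le> D" using D(2) that by auto
      then show ?thesis using norm_triangle_ineq4[of x y] by (simp add: dist_norm)
    qed
    then have "indicator (U \<times> U) (x, y) \<le> (indicator U x * indicator (cball x (2 * D)) y :: real)" for y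
      by (auto simp: indicator_def)
    then have "(\<integral>\<^sup>+y. ennreal (indicator (U \<times> U) (x, y) * norm (x - y) powr e) \<partial>lebesgue)
        \<le> (\<integral>\<^sup>+y. ennreal (indicator U x) * ennreal (indicator (cball x (2 * D)) y * norm (x - y) powr e) \<partial>lebesgue)"
      by (intro nn_integral_mono) (auto simp: indicator_def ennreal_mult')
    also have "\<dots> = ennreal (indicator U x) *
        (\<integral>\<^sup>+y. ennreal (indicator (cball x (2 * D)) y * norm (x - y) powr e) \<partial>lebesgue)"
      by (rule nn_integral_cmult) measurable
    also have "\<dots> \<le> ennreal (indicator U x) * C"
      using C(2) by (intro mult_left_mono) auto
    finally show ?thesis .
  qed
  have "emeasure lebesgue U \<le> emeasure lebesgue (cball (0::'a) D)"
    using D by (intro emeasure_mono) auto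
  also have "\<dots> < \<infinity>" using emeasure_lborel_cball_finite by simp
  finally have U_fin: "emeasure lebesgue U < \<infinity>" .
  have "(\<integral>\<^sup>+z. ennreal (indicator (U \<times> U) z * norm (fst z - snd z) powr e) \<partial>(lebesgue \<Otimes>\<^sub>M lebesgue))
      = (\<integral>\<^sup>+x. \<integral>\<^sup>+y. ennreal (indicator (U \<times> U) (x, y) * norm (x - y) powr e) \<partial>lebesgue \<partial>lebesgue)"
    by (subst lebesgue.nn_integral_fst[symmetric]) (auto intro!: pair_measureI)
  also have "\<dots> \<le> (\<integral>\<^sup>+x. ennreal (indicator U x) * C \<partial>lebesgue)"
    by (intro nn_integral_mono inner)
  also have "\<dots> = emeasure lebesgue U * C"
    by (simp add: nn_integral_multc ennreal_indicator)
  also have "\<dots> < \<infinity>" using U_fin C(1) by (simp add: ennreal_mult_less_top)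
  finally show "(\<integral>\<^sup>+z. ennreal (indicator (U \<times> U) z * norm (fst z - snd z) powr e) \<partial>(lebesgue \<Otimes>\<^sub>M lebesgue)) < \<infinity>" .
qed (use U in \<open>auto intro!: pair_measureI\<close>)

lemma abs_fractional_kernel_lipschitz_le:
  assumes p: "1 < p" and xy: "x \<noteq> y"
    and lip: "\<bar>\<phi> x - \<phi> y\<bar> \<le> L * norm (x - y)" and L: "0 \<le> L"
  shows "\<bar>fractional_kernel p a u (x, y) * (\<phi> x - \<phi> y)\<bar>
    \<le> \<bar>u x - u y\<bar> powr p / norm (x - y) powr a + L powr p * norm (x - y) powr (p - a)"
proof -
  define d where "d = norm (x - y)"
  have d: "0 < d" using xy unfolding d_def by simp
  have "\<bar>\<phi> x - \<phi> y\<bar> powr p \<le> (L * d) powr p" using lip p unfolding d_def by (intro powr_mono2) auto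
  also have "\<dots> = L powr p * d powr p" using L d by (simp add: powr_mult)
  finally have lip_p: "\<bar>\<phi> x - \<phi> y\<bar> powr p \<le> L powr p * d powr p" .
  have "\<bar>fractional_kernel p a u (x, y) * (\<phi> x - \<phi> y)\<bar>
      = \<bar>u x - u y\<bar> powr (p - 1) * \<bar>\<phi> x - \<phi> y\<bar> / d powr a"
    by (simp add: abs_mult abs_fractional_kernel d_def)
  also have "\<dots> \<le> (\<bar>u x - u y\<bar> powr p + \<bar>\<phi> x - \<phi> y\<bar> powr p) / d powr a"
    using powr_pred_mult_le_powr_add[of "\<bar>u x - u y\<bar>" "\<bar>\<phi> x - \<phi> y\<bar>" p] p
    by (intro divide_right_mono) auto
  also have "\<dots> \<le> (\<bar>u x - u y\<bar> powr p + L powr p * d powr p) / d powr a"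
    using lip_p by (intro divide_right_mono) auto
  also have "\<dots> = \<bar>u x - u y\<bar> powr p / d powr a + L powr p * d powr (p - a)"
    using d by (simp add: add_divide_distrib powr_diff)
  finally show ?thesis unfolding d_def .
qed

lemma compact_diag_nbhd_gap:
  fixes K :: "'a::metric_space set"
  assumes K: "compact K" and V: "open V" "diag \<subseteq> V"
  obtains r where "0 < r" "\<And>x y. x \<in> K \<Longrightarrow> (x, y) \<notin> V \<Longrightarrow> r \<le> dist x y"
proof -
  have "compact ((\<lambda>x. (x, x)) ` K)"
    using K by (intro compact_continuous_image) (auto intro!: continuous_intros)
  moreover have "(\<lambda>x. (x, x)) ` K \<subseteq> V" using V(2) unfolding diag_def by auto
  ultimately obtain r where r: "0 < r" "(\<Union>w\<in>(\<lambda>x. (x, x)) ` K. cball w r) \<subseteq> V"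
    using compact_subset_open_imp_cball_epsilon_subset[OF _ V(1)] by blast
  have "r \<le> dist x y" if "x \<in> K" "(x, y) \<notin> V" for x y
  proof (rule ccontr)
    assume "\<not> r \<le> dist x y"
    then have "(x, y) \<in> cball (x, x) r" by (simp add: dist_Pair_Pair)
    then show False using r(2) that by blast
  qed
  then show ?thesis using r(1) that by blast
qed

lemma integral_antisymmetric_kernel_off_symmetric_set:
  fixes g :: "'a \<times> 'a \<Rightarrow> real" and \<phi> :: "'a \<Rightarrow> real"
  assumes M: "sigma_finite_measure M"
    and B: "\<And>x y. (x, y) \<in> B \<Longrightarrow> (y, x) \<in> B"
    and g_swap: "\<And>x y. g (y, x) = - g (x, y)"
    and int: "integrable (M \<Otimes>\<^sub>M M) (\<lambda>z. indicator (UNIV - B) z * g z * \<phi> (fst z))"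
  shows "(\<integral>z. indicator (UNIV - B) z * (g z * (\<phi> (fst z) - \<phi> (snd z))) \<partial>(M \<Otimes>\<^sub>M M))
       = (\<integral>x. \<phi> x * (2 * (LINT y:(UNIV - {y. (x, y) \<in> B})|M. g (x, y))) \<partial>M)"
proof -
  interpret pair_sigma_finite M M using M by (intro pair_sigma_finite.intro)
  define P where "P z = indicator (UNIV - B) z * g z * \<phi> (fst z)" for z
  have P_int: "integrable (M \<Otimes>\<^sub>M M) P" using int unfolding P_def .
  have "integrable (M \<Otimes>\<^sub>M M) (\<lambda>(x, y). P (y, x))"
    using integrable_product_swap[OF P_int] .
  then have P_swap_int: "integrable (M \<Otimes>\<^sub>M M) (\<lambda>z. P (snd z, fst z))"
    by (simp add: case_prod_beta')
  have B_swap: "indicator (UNIV - B) (y, x) = (indicator (UNIV - B) (x, y) :: real)" for x y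
    using B by (auto simp: indicator_def)
  have "(\<lambda>z. indicator (UNIV - B) z * (g z * (\<phi> (fst z) - \<phi> (snd z)))) = (\<lambda>z. P z + P (snd z, fst z))"
  proof
    fix z :: "'a \<times> 'a"
    obtain x y where z: "z = (x, y)" by (cases z)
    show "indicator (UNIV - B) z * (g z * (\<phi> (fst z) - \<phi> (snd z))) = P z + P (snd z, fst z)"
      unfolding z P_def fst_conv snd_conv B_swap[of x y] g_swap[of x y] by (simp add: algebra_simps)
  qed
  then have "(\<integral>z. indicator (UNIV - B) z * (g z * (\<phi> (fst z) - \<phi> (snd z))) \<partial>(M \<Otimes>\<^sub>M M))
      = integral\<^sup>L (M \<Otimes>\<^sub>M M) P + (\<integral>z. P (snd z, fst z) \<partial>(M \<Otimes>\<^sub>M M))"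
    using Bochner_Integration.integral_add[OF P_int P_swap_int] by simp
  also have "(\<integral>z. P (snd z, fst z) \<partial>(M \<Otimes>\<^sub>M M)) = integral\<^sup>L (M \<Otimes>\<^sub>M M) P"
    using integral_product_swap[of P] P_int by (simp add: case_prod_beta')
  also have "integral\<^sup>L (M \<Otimes>\<^sub>M M) P = (\<integral>x. \<integral>y. P (x, y) \<partial>M \<partial>M)"
    using integral_fst'[OF P_int] by simp
  also have "(\<lambda>x. \<integral>y. P (x, y) \<partial>M) = (\<lambda>x. \<phi> x * (LINT y:(UNIV - {y. (x, y) \<in> B})|M. g (x, y)))"
    by (simp add: P_def set_lebesgue_integral_def indicator_def mult.commute[of _ "\<phi> _"] mult.assoc)
  finally show ?thesis by (simp add: mult.left_commute[of _ 2])
qed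

section \<open>Passage to the limit\<close>

lemma closed_diag: "closed (diag :: ('a::metric_space \<times> 'a) set)"
proof -
  have "closed {z :: 'a \<times> 'a. fst z = snd z}" by (intro closed_Collect_eq continuous_intros)
  moreover have "diag = {z :: 'a \<times> 'a. fst z = snd z}" unfolding diag_def by auto
  ultimately show ?thesis by simp
qed

lemma hausdist_ext_tendsto_0_imp_eventually_notin:
  fixes A :: "'b \<Rightarrow> 'a::metric_space set"
  assumes lim: "((\<lambda>t. hausdist_ext (A t) D) \<longlongrightarrow> 0) F"
    and D: "closed D" "D \<noteq> {}" and z: "z \<notin> D"
  shows "eventually (\<lambda>t. z \<notin> A t) F"
proof -
  have "0 < infdist z D" using infdist_pos_not_in_closed[OF D] z by blast
  then have "eventually (\<lambda>t. hausdist_ext (A t) D < ereal (infdist z D)) F"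
    using order_tendstoD(2)[OF lim] by simp
  then show ?thesis
  proof (rule eventually_mono)
    fix t assume less: "hausdist_ext (A t) D < ereal (infdist z D)"
    show "z \<notin> A t"
    proof
      assume "z \<in> A t"
      then have "ereal (infdist z D) \<le> (SUP w\<in>A t. ereal (infdist w D))" by (rule SUP_upper)
      also have "\<dots> \<le> hausdist_ext (A t) D" unfolding hausdist_ext_def by simp
      finally show False using less by simp
    qed
  qed
qed

lemma integral_dominated_convergence_at_right:
  fixes s :: "real \<Rightarrow> 'a \<Rightarrow> 'b::{banach, second_countable_topology}" and w :: "'a \<Rightarrow> real"
  assumes "f \<in> borel_measurable M" "\<And>t. a < t \<Longrightarrow> s t \<in> borel_measurable M" "integrable M w"
    and lim: "AE x in M. ((\<lambda>t. s t x) \<longlongrightarrow> f x) (at_right a)"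
    and bound: "\<And>t. a < t \<Longrightarrow> AE x in M. norm (s t x) \<le> w x"
  shows "((\<lambda>t. integral\<^sup>L M (s t)) \<longlongrightarrow> integral\<^sup>L M f) (at_right a)"
proof (rule tendsto_at_right_sequentially[of a "a + 1"])
  fix S :: "nat \<Rightarrow> real" assume S: "\<And>n. a < S n" "S \<longlonglongrightarrow> a"
  then have S_filter: "filterlim S (at_right a) sequentially"
    by (intro tendsto_imp_filterlim_at_right) auto
  show "(\<lambda>n. integral\<^sup>L M (s (S n))) \<longlonglongrightarrow> integral\<^sup>L M f"
  proof (rule integral_dominated_convergence[where w = w])
    show "AE x in M. (\<lambda>n. s (S n) x) \<longlonglongrightarrow> f x"
      using lim by eventually_elim (rule filterlim_compose[OF _ S_filter])
  qed (use assms S in auto)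
qed simp

lemma tendsto_integral_outside_shrinking_diag_nbhd:
  fixes F :: "'a::metric_space \<times> 'a \<Rightarrow> real" and A :: "real \<Rightarrow> ('a \<times> 'a) set"
  assumes F_int: "integrable (M \<Otimes>\<^sub>M M) F"
    and A_meas: "\<And>\<epsilon>. 0 < \<epsilon> \<Longrightarrow> A \<epsilon> \<in> sets (M \<Otimes>\<^sub>M M)"
    and A_haus: "((\<lambda>\<epsilon>. hausdist_ext (A \<epsilon>) diag) \<longlongrightarrow> 0) (at_right 0)"
    and F_diag: "\<And>x. F (x, x) = 0"
  shows "((\<lambda>\<epsilon>. \<integral>z. indicator (UNIV - A \<epsilon>) z * F z \<partial>(M \<Otimes>\<^sub>M M)) \<longlongrightarrow> integral\<^sup>L (M \<Otimes>\<^sub>M M) F) (at_right 0)"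
proof (rule integral_dominated_convergence_at_right[where w = "\<lambda>z. \<bar>F z\<bar>"])
  have [measurable]: "F \<in> borel_measurable (M \<Otimes>\<^sub>M M)" using F_int by auto
  then show "F \<in> borel_measurable (M \<Otimes>\<^sub>M M)" .
  show "integrable (M \<Otimes>\<^sub>M M) (\<lambda>z. \<bar>F z\<bar>)" using F_int by auto
  fix \<epsilon> :: real assume "0 < \<epsilon>"
  then have [measurable]: "A \<epsilon> \<in> sets (M \<Otimes>\<^sub>M M)" by (rule A_meas)
  have "(\<lambda>z. indicator (UNIV - A \<epsilon>) z * F z) = (\<lambda>z. F z - indicator (A \<epsilon>) z * F z)"
    by (auto simp: indicator_def)
  then show "(\<lambda>z. indicator (UNIV - A \<epsilon>) z * F z) \<in> borel_measurable (M \<Otimes>\<^sub>M M)" by simp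
  show "AE z in M \<Otimes>\<^sub>M M. norm (indicator (UNIV - A \<epsilon>) z * F z) \<le> \<bar>F z\<bar>"
    by (intro AE_I2) (simp add: abs_mult indicator_def)
next
  show "AE z in M \<Otimes>\<^sub>M M. ((\<lambda>\<epsilon>. indicator (UNIV - A \<epsilon>) z * F z) \<longlongrightarrow> F z) (at_right 0)"
  proof (intro AE_I2)
    fix z :: "'a \<times> 'a"
    show "((\<lambda>\<epsilon>. indicator (UNIV - A \<epsilon>) z * F z) \<longlongrightarrow> F z) (at_right 0)"
    proof (cases "z \<in> diag")
      case True
      then have "F z = 0" using F_diag by (auto simp: diag_def)
      then show ?thesis by simp
    next
      case False
      have "eventually (\<lambda>\<epsilon>. z \<notin> A \<epsilon>) (at_right 0)"
        using hausdist_ext_tendsto_0_imp_eventually_notin[OF A_haus closed_diag _ False]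
        by (auto simp: diag_def)
      then have "eventually (\<lambda>\<epsilon>. F z = indicator (UNIV - A \<epsilon>) z * F z) (at_right 0)"
        by eventually_elim simp
      then show ?thesis by (rule Lim_transform_eventually[OF tendsto_const])
    qed
  qed
qed

lemma tendsto_integral_mult_bounded_set_L1:
  fixes G :: "'b \<Rightarrow> 'a \<Rightarrow> real"
  assumes G_int: "eventually (\<lambda>t. set_integrable M K (G t)) F"
    and f_int: "set_integrable M K f"
    and lim: "((\<lambda>t. LINT x:K|M. \<bar>G t x - f x\<bar>) \<longlongrightarrow> 0) F"
    and \<phi> [measurable]: "\<phi> \<in> borel_measurable M"
    and \<phi>_bounded: "\<And>x. \<bar>\<phi> x\<bar> \<le> C" and \<phi>_supp: "\<And>x. x \<notin> K \<Longrightarrow> \<phi> x = 0"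
  shows "((\<lambda>t. \<integral>x. \<phi> x * G t x \<partial>M) \<longlongrightarrow> (\<integral>x. \<phi> x * f x \<partial>M)) F"
proof -
  have restrict: "(\<lambda>x. \<phi> x * h x) = (\<lambda>x. \<phi> x * (indicator K x * h x))" for h :: "'a \<Rightarrow> real"
    using \<phi>_supp by (intro ext) (metis indicator_simps mult_eq_0_iff mult_1)
  have f_int': "integrable M (\<lambda>x. indicator K x * f x)" using f_int by (simp add: set_integrable_def)
  have "eventually (\<lambda>t. norm ((\<integral>x. \<phi> x * G t x \<partial>M) - (\<integral>x. \<phi> x * f x \<partial>M))
      \<le> C * (LINT x:K|M. \<bar>G t x - f x\<bar>)) F"
    using G_int
  proof eventually_elim
    case (elim t)
    then have G_int': "integrable M (\<lambda>x. indicator K x * G t x)" by (simp add: set_integrable_def)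
    then have diff_int: "integrable M (\<lambda>x. indicator K x * (G t x - f x))"
      using f_int' by (simp add: right_diff_distrib)
    have "(\<integral>x. \<phi> x * G t x \<partial>M) - (\<integral>x. \<phi> x * f x \<partial>M)
        = (\<integral>x. \<phi> x * (indicator K x * (G t x - f x)) \<partial>M)"
      using integrable_bounded_mult[OF G_int' \<phi> \<phi>_bounded] integrable_bounded_mult[OF f_int' \<phi> \<phi>_bounded]
      by (subst (1 2) restrict) (simp add: right_diff_distrib)
    also have "norm \<dots> \<le> C * (\<integral>x. \<bar>indicator K x * (G t x - f x)\<bar> \<partial>M)"
      using abs_integral_bounded_mult_le[OF diff_int \<phi> \<phi>_bounded] by simp
    also have "(\<integral>x. \<bar>indicator K x * (G t x - f x)\<bar> \<partial>M) = (LINT x:K|M. \<bar>G t x - f x\<bar>)"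
      by (simp add: set_lebesgue_integral_def abs_mult)
    finally show ?case .
  qed
  moreover have "((\<lambda>t. C * (LINT x:K|M. \<bar>G t x - f x\<bar>)) \<longlongrightarrow> 0) F"
    using tendsto_mult_right_zero[OF lim] .
  ultimately have "((\<lambda>t. (\<integral>x. \<phi> x * G t x \<partial>M) - (\<integral>x. \<phi> x * f x \<partial>M)) \<longlongrightarrow> 0) F"
    by (rule Lim_null_comparison)
  then show ?thesis by (rule LIM_zero_cancel)
qed

lemma L1_loc_tendsto_tested:
  fixes \<phi> :: "'a::euclidean_space \<Rightarrow> real"
  assumes conv: "L1_loc_tendsto \<Omega> G f" and f: "L1_loc \<Omega> f" and K: "compact K" "K \<subseteq> \<Omega>"
    and \<phi>: "\<phi> \<in> borel_measurable lebesgue" "\<And>x. \<bar>\<phi> x\<bar> \<le> C" "\<And>x. x \<notin> K \<Longrightarrow> \<phi> x = 0"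
  shows "((\<lambda>\<epsilon>. \<integral>x. \<phi> x * G \<epsilon> x \<partial>lebesgue) \<longlongrightarrow> (\<integral>x. \<phi> x * f x \<partial>lebesgue)) (at_right 0)"
proof (rule tendsto_integral_mult_bounded_set_L1[OF _ _ _ \<phi>])
  show "eventually (\<lambda>\<epsilon>. set_integrable lebesgue K (G \<epsilon>)) (at_right 0)"
    and "((\<lambda>\<epsilon>. LINT x:K|lebesgue. \<bar>G \<epsilon> x - f x\<bar>) \<longlongrightarrow> 0) (at_right 0)"
    using conv K unfolding L1_loc_tendsto_def by blast+
  show "set_integrable lebesgue K f" using f K unfolding L1_loc_def by blast
qed

section \<open>The weak formulation\<close>

locale fractional_weak_form =
  fixes p a M :: real and u \<phi> :: "'a::euclidean_space \<Rightarrow> real" and K :: "'a set"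
  assumes p: "1 < p" and a: "real DIM('a) < a" and K: "compact K"
    and u_meas: "u \<in> borel_measurable lebesgue"
    and u_loc: "(\<integral>\<^sup>+x\<in>K. ennreal (\<bar>u x\<bar> powr (p - 1)) \<partial>lebesgue) < \<infinity>"
    and u_tail: "(\<integral>\<^sup>+y. ennreal (\<bar>u y\<bar> powr (p - 1) / (1 + norm y) powr a) \<partial>lebesgue) < \<infinity>"
    and \<phi>_meas: "\<phi> \<in> borel_measurable lebesgue"
    and \<phi>_bounded: "\<And>x. \<bar>\<phi> x\<bar> \<le> M" and \<phi>_supp: "\<And>x. x \<notin> K \<Longrightarrow> \<phi> x = 0"
begin

declare u_meas [measurable] \<phi>_meas [measurable]

lemma integrable_kernel_far_from_diagonal:
  assumes r: "0 < r"
  shows "integrable (lebesgue \<Otimes>\<^sub>M lebesgue)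
           (\<lambda>z. indicator {z. r \<le> norm (fst z - snd z)} z * fractional_kernel p a u z * \<phi> (fst z))"
    (is "integrable _ ?F")
proof -
  let ?G = "\<lambda>z. indicator K (fst z) * indicator {z. r \<le> norm (fst z - snd z)} z *
      (\<bar>u (fst z)\<bar> powr (p - 1) + \<bar>u (snd z)\<bar> powr (p - 1)) / norm (fst z - snd z) powr a"
  have "integrable (lebesgue \<Otimes>\<^sub>M lebesgue) ?G"
    by (rule integrable_far_from_diagonal[OF K r a _ _ u_loc u_tail]) auto
  then have G_int: "integrable (lebesgue \<Otimes>\<^sub>M lebesgue) (\<lambda>z. 2 powr (p - 1) * M * ?G z)"
    by (rule integrable_mult_right)
  have M: "0 \<le> M" using \<phi>_bounded[of 0] by linarith
  show ?thesis
  proof (rule integrable_abs_le[OF G_int])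
    show "?F \<in> borel_measurable (lebesgue \<Otimes>\<^sub>M lebesgue)" by measurable
    fix z :: "'a \<times> 'a"
    obtain x y where z: "z = (x, y)" by (cases z)
    show "\<bar>?F z\<bar> \<le> 2 powr (p - 1) * M * ?G z"
    proof (cases "x \<in> K \<and> r \<le> norm (x - y)")
      case True
      have "\<bar>u x - u y\<bar> powr (p - 1) * \<bar>\<phi> x\<bar> \<le> 2 powr (p - 1) * (\<bar>u x\<bar> powr (p - 1) + \<bar>u y\<bar> powr (p - 1)) * M"
        using abs_diff_powr_le[of "p - 1" "u x" "u y"] p \<phi>_bounded[of x] by (intro mult_mono) auto
      then have "\<bar>u x - u y\<bar> powr (p - 1) * \<bar>\<phi> x\<bar> / norm (x - y) powr a
          \<le> 2 powr (p - 1) * (\<bar>u x\<bar> powr (p - 1) + \<bar>u y\<bar> powr (p - 1)) * M / norm (x - y) powr a"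
        by (intro divide_right_mono) auto
      then show ?thesis using True by (simp add: z abs_mult abs_fractional_kernel field_simps)
    next
      case False
      then have "\<bar>?F z\<bar> = 0" using \<phi>_supp by (auto simp: z)
      moreover have "0 \<le> 2 powr (p - 1) * M * ?G z" using M by simp
      ultimately show ?thesis by linarith
    qed
  qed
qed

text \<open>Near the diagonal (both points in \<open>U\<close>) the integrand is controlled by the Gagliardo
  seminorm and the Lipschitz bound; away from it, one point lies in \<open>K\<close> at distance at least
  \<open>\<delta>\<close> from the other, where the far-field estimate applies.\<close>

lemma integrable_weak_form_integrand:
  assumes a_upper: "a < real DIM('a) + p" and U: "open U" "bounded U" "K \<subseteq> U"
    and u_gagliardo: "(\<integral>\<^sup>+z\<in>U \<times> U. ennreal (\<bar>u (fst z) - u (snd z)\<bar> powr p /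
         norm (fst z - snd z) powr a) \<partial>(lebesgue \<Otimes>\<^sub>M lebesgue)) < \<infinity>"
    and \<phi>_lip: "\<And>x y. \<bar>\<phi> x - \<phi> y\<bar> \<le> L * norm (x - y)" and L: "0 \<le> L"
  shows "integrable (lebesgue \<Otimes>\<^sub>M lebesgue) (\<lambda>z. fractional_kernel p a u z * (\<phi> (fst z) - \<phi> (snd z)))"
    (is "integrable _ ?F")
proof -
  have [measurable]: "U \<in> sets lebesgue" using U by simp
  obtain \<delta> where \<delta>: "0 < \<delta>" "(\<Union>x\<in>K. cball x \<delta>) \<subseteq> U"
    using compact_subset_open_imp_cball_epsilon_subset[OF K U(1,3)] by blast
  define H where "H z = indicator {z. \<delta> \<le> norm (fst z - snd z)} z * fractional_kernel p a u z * \<phi> (fst z)"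
    for z :: "'a \<times> 'a"
  have H_int: "integrable (lebesgue \<Otimes>\<^sub>M lebesgue) H"
    unfolding H_def using \<delta>(1) by (rule integrable_kernel_far_from_diagonal)
  have "integrable (lebesgue \<Otimes>\<^sub>M lebesgue) (\<lambda>(x, y). H (y, x))"
    using lebesgue_pair.integrable_product_swap[OF H_int] .
  then have H_swap_int: "integrable (lebesgue \<Otimes>\<^sub>M lebesgue) (\<lambda>z. H (snd z, fst z))"
    by (simp add: case_prod_beta')
  have gagliardo_int: "integrable (lebesgue \<Otimes>\<^sub>M lebesgue)
      (\<lambda>z. indicator (U \<times> U) z * (\<bar>u (fst z) - u (snd z)\<bar> powr p / norm (fst z - snd z) powr a))"
  proof (rule integrableI_nonneg)
    show "(\<integral>\<^sup>+z. ennreal (indicator (U \<times> U) z * (\<bar>u (fst z) - u (snd z)\<bar> powr p /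
        norm (fst z - snd z) powr a)) \<partial>(lebesgue \<Otimes>\<^sub>M lebesgue)) < \<infinity>"
      unfolding nn_integral_indicator_times by (rule u_gagliardo)
  qed auto
  have lipschitz_int: "integrable (lebesgue \<Otimes>\<^sub>M lebesgue)
      (\<lambda>z. indicator (U \<times> U) z * norm (fst z - snd z) powr (p - a))"
    using U(2) a_upper by (intro integrable_norm_diff_powr_on_bounded_square) auto
  define m where "m z = indicator (U \<times> U) z * (\<bar>u (fst z) - u (snd z)\<bar> powr p / norm (fst z - snd z) powr a)
      + L powr p * (indicator (U \<times> U) z * norm (fst z - snd z) powr (p - a)) + \<bar>H z\<bar> + \<bar>H (snd z, fst z)\<bar>"
    for z :: "'a \<times> 'a"
  have m_int: "integrable (lebesgue \<Otimes>\<^sub>M lebesgue) m"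
    using gagliardo_int lipschitz_int H_int H_swap_int unfolding m_def by auto
  show ?thesis
  proof (rule integrable_abs_le[OF m_int])
    show "?F \<in> borel_measurable (lebesgue \<Otimes>\<^sub>M lebesgue)" by measurable
    fix z :: "'a \<times> 'a"
    obtain x y where z: "z = (x, y)" by (cases z)
    have far: "\<delta> \<le> norm (x - y)" if "x \<in> K" "y \<notin> U" for x y
      using that \<delta>(2) by (force simp: dist_norm)
    consider (diag) "x = y" | (near) "x \<noteq> y" "x \<in> U" "y \<in> U" | (outside) "x \<notin> K" "y \<notin> K"
      | (xK) "x \<in> K" "y \<notin> U" | (yK) "y \<in> K" "x \<notin> U"
      using U(3) by blast
    then show "\<bar>?F z\<bar> \<le> m z"
    proof cases
      case near
      then show ?thesis
        using abs_fractional_kernel_lipschitz_le[OF p near(1) \<phi>_lip L, of a u]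
          abs_ge_zero[of "H (x, y)"] abs_ge_zero[of "H (y, x)"] by (simp add: z m_def)
    next
      case xK
      then have "?F z = H z" using far[of x y] \<phi>_supp U(3) by (auto simp: z H_def)
      then show ?thesis by (simp add: m_def)
    next
      case yK
      then have "\<phi> x = 0" using U(3) \<phi>_supp by auto
      then have "?F z = H (snd z, fst z)"
        using yK far[of y x] by (simp add: z H_def fractional_kernel_swap[of p a u y x] norm_minus_commute)
      then show ?thesis by (simp add: m_def)
    qed (auto simp: z m_def fractional_kernel_def \<phi>_supp)
  qed
qed

lemma integral_weak_form_outside_diag_nbhd:
  assumes B: "B \<in> sets (lebesgue \<Otimes>\<^sub>M lebesgue)" "\<And>x y. (x, y) \<in> B \<Longrightarrow> (y, x) \<in> B"
    and V: "open V" "diag \<subseteq> V" "V \<subseteq> B"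
  shows "(\<integral>z. indicator (UNIV - B) z * (fractional_kernel p a u z * (\<phi> (fst z) - \<phi> (snd z))) \<partial>(lebesgue \<Otimes>\<^sub>M lebesgue))
       = (\<integral>x. \<phi> x * (2 * (LINT y:(UNIV - {y. (x, y) \<in> B})|lebesgue. fractional_kernel p a u (x, y))) \<partial>lebesgue)"
proof (rule integral_antisymmetric_kernel_off_symmetric_set[where g = "fractional_kernel p a u",
      OF sigma_finite_lebesgue B(2) fractional_kernel_swap])
  obtain r where r: "0 < r" "\<And>x y. x \<in> K \<Longrightarrow> (x, y) \<notin> V \<Longrightarrow> r \<le> dist x y"
    using compact_diag_nbhd_gap[OF K V(1,2)] by blast
  have "UNIV - B \<in> sets (lebesgue \<Otimes>\<^sub>M lebesgue)"
    using sets.compl_sets[OF B(1)] by (simp add: space_pair_measure)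
  then have "integrable (lebesgue \<Otimes>\<^sub>M lebesgue) (\<lambda>z. indicator (UNIV - B) z *\<^sub>R
      (indicator {z. r \<le> norm (fst z - snd z)} z * fractional_kernel p a u z * \<phi> (fst z)))"
    using integrable_kernel_far_from_diagonal[OF r(1)] by (rule integrable_mult_indicator)
  moreover have "indicator (UNIV - B) z * (indicator {z. r \<le> norm (fst z - snd z)} z * fractional_kernel p a u z * \<phi> (fst z))
      = indicator (UNIV - B) z * fractional_kernel p a u z * \<phi> (fst z)" for z
    using r(2)[of "fst z" "snd z"] V(3) \<phi>_supp[of "fst z"]
    by (cases "z \<in> B"; cases "fst z \<in> K") (auto simp: indicator_def dist_norm)
  ultimately show "integrable (lebesgue \<Otimes>\<^sub>M lebesgue) (\<lambda>z. indicator (UNIV - B) z * fractional_kernel p a u z * \<phi> (fst z))"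
    by simp
qed

lemma tendsto_integral_truncations:
  fixes A :: "real \<Rightarrow> ('a \<times> 'a) set"
  assumes F_int: "integrable (lebesgue \<Otimes>\<^sub>M lebesgue) (\<lambda>z. fractional_kernel p a u z * (\<phi> (fst z) - \<phi> (snd z)))"
    and A_nbhd: "\<And>\<epsilon>. \<epsilon> > 0 \<Longrightarrow> \<exists>V. open V \<and> diag \<subseteq> V \<and> V \<subseteq> A \<epsilon>"
    and A_meas: "\<And>\<epsilon>. \<epsilon> > 0 \<Longrightarrow> A \<epsilon> \<in> sets (lebesgue \<Otimes>\<^sub>M lebesgue)"
    and A_sym: "\<And>\<epsilon> x y. \<epsilon> > 0 \<Longrightarrow> (x, y) \<in> A \<epsilon> \<Longrightarrow> (y, x) \<in> A \<epsilon>"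
    and A_haus: "((\<lambda>\<epsilon>. hausdist_ext (A \<epsilon>) diag) \<longlongrightarrow> 0) (at_right 0)"
  shows "((\<lambda>\<epsilon>. \<integral>x. \<phi> x * (2 * (LINT y:(UNIV - {y. (x, y) \<in> A \<epsilon>})|lebesgue. fractional_kernel p a u (x, y))) \<partial>lebesgue)
      \<longlongrightarrow> (\<integral>z. fractional_kernel p a u z * (\<phi> (fst z) - \<phi> (snd z)) \<partial>(lebesgue \<Otimes>\<^sub>M lebesgue))) (at_right 0)"
proof (rule Lim_transform_eventually)
  show "((\<lambda>\<epsilon>. \<integral>z. indicator (UNIV - A \<epsilon>) z * (fractional_kernel p a u z * (\<phi> (fst z) - \<phi> (snd z)))
      \<partial>(lebesgue \<Otimes>\<^sub>M lebesgue)) \<longlongrightarrow> (\<integral>z. fractional_kernel p a u z * (\<phi> (fst z) - \<phi> (snd z))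
      \<partial>(lebesgue \<Otimes>\<^sub>M lebesgue))) (at_right 0)"
  proof (rule tendsto_integral_outside_shrinking_diag_nbhd[OF F_int A_meas A_haus])
    show "fractional_kernel p a u (x, x) * (\<phi> (fst (x, x)) - \<phi> (snd (x, x))) = 0" for x by simp
  qed
  show "eventually (\<lambda>\<epsilon>. (\<integral>z. indicator (UNIV - A \<epsilon>) z * (fractional_kernel p a u z * (\<phi> (fst z) - \<phi> (snd z)))
      \<partial>(lebesgue \<Otimes>\<^sub>M lebesgue)) = (\<integral>x. \<phi> x * (2 * (LINT y:(UNIV - {y. (x, y) \<in> A \<epsilon>})|lebesgue.
      fractional_kernel p a u (x, y))) \<partial>lebesgue)) (at_right 0)"
  proof (rule eventually_at_right_less[THEN eventually_mono])
    fix \<epsilon> :: real assume "0 < \<epsilon>"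
    then obtain V where "open V" "diag \<subseteq> V" "V \<subseteq> A \<epsilon>" using A_nbhd by blast
    then show "(\<integral>z. indicator (UNIV - A \<epsilon>) z * (fractional_kernel p a u z * (\<phi> (fst z) - \<phi> (snd z)))
        \<partial>(lebesgue \<Otimes>\<^sub>M lebesgue)) = (\<integral>x. \<phi> x * (2 * (LINT y:(UNIV - {y. (x, y) \<in> A \<epsilon>})|lebesgue.
        fractional_kernel p a u (x, y))) \<partial>lebesgue)"
      using A_meas A_sym \<open>0 < \<epsilon>\<close> by (intro integral_weak_form_outside_diag_nbhd) auto
  qed
qed

end

theorem lemma2p5:
  fixes s p :: real and \<Omega> :: "'a::euclidean_space set"
    and u f :: "'a \<Rightarrow> real" and A :: "real \<Rightarrow> ('a \<times> 'a) set"
  assumes s: "0 < s" "s < 1" and p: "1 < p"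
    and \<Omega>: "open \<Omega>"
    and u: "tW_loc s p \<Omega> u"
    and f: "L1_loc \<Omega> f"
    and A_nbhd: "\<And>\<epsilon>. \<epsilon> > 0 \<Longrightarrow> \<exists>V. open V \<and> diag \<subseteq> V \<and> V \<subseteq> A \<epsilon>"
    and A_meas: "\<And>\<epsilon>. \<epsilon> > 0 \<Longrightarrow> A \<epsilon> \<in> sets (lebesgue \<Otimes>\<^sub>M lebesgue)"
    and A_sym: "\<And>\<epsilon> x y. \<epsilon> > 0 \<Longrightarrow> (x, y) \<in> A \<epsilon> \<Longrightarrow> (y, x) \<in> A \<epsilon>"
    and A_haus: "((\<lambda>\<epsilon>. hausdist_ext (A \<epsilon>) diag) \<longlongrightarrow> 0) (at_right 0)"
    and conv: "L1_loc_tendsto \<Omega>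
       (\<lambda>\<epsilon> x. 2 * (LINT y:(UNIV - {y. (x, y) \<in> A \<epsilon>})|lebesgue.
            spow (u x - u y) (p - 1) / norm (x - y) powr (real DIM('a) + p * s))) f"
    and \<phi>: "test_fun \<Omega> \<phi>"
  shows "(LINT z|(lebesgue \<Otimes>\<^sub>M lebesgue).
            spow (u (fst z) - u (snd z)) (p - 1) * (\<phi> (fst z) - \<phi> (snd z))
              / norm (fst z - snd z) powr (real DIM('a) + p * s))
         = (LINT x:\<Omega>|lebesgue. f x * \<phi> x)"
proof -
  define a where "a = real DIM('a) + p * s"
  have a: "real DIM('a) < a" "a < real DIM('a) + p" using s p by (auto simp: a_def)
  obtain K L M where K: "compact K" "K \<subseteq> \<Omega>" and \<phi>_supp: "\<And>x. x \<notin> K \<Longrightarrow> \<phi> x = 0"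
    and \<phi>_lip: "0 \<le> L" "\<And>x y. \<bar>\<phi> x - \<phi> y\<bar> \<le> L * norm (x - y)"
    and \<phi>_bounded: "\<And>x. \<bar>\<phi> x\<bar> \<le> M" and \<phi>_meas: "\<phi> \<in> borel_measurable lebesgue"
    using test_fun_properties[OF \<phi>] by blast
  obtain U where U: "open U" "bounded U" "K \<subseteq> U" and u_meas: "u \<in> borel_measurable lebesgue"
    and u_gagliardo: "(\<integral>\<^sup>+z\<in>U \<times> U. ennreal (\<bar>u (fst z) - u (snd z)\<bar> powr p /
       norm (fst z - snd z) powr a) \<partial>(lebesgue \<Otimes>\<^sub>M lebesgue)) < \<infinity>"
    and u_loc: "(\<integral>\<^sup>+x\<in>K. ennreal (\<bar>u x\<bar> powr (p - 1)) \<partial>lebesgue) < \<infinity>"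
    and u_tail: "(\<integral>\<^sup>+y. ennreal (\<bar>u y\<bar> powr (p - 1) / (1 + norm y) powr a) \<partial>lebesgue) < \<infinity>"
    using tW_loc_on_compact[OF u p \<Omega> K] unfolding a_def by blast
  interpret weak_form: fractional_weak_form p a M u \<phi> K
    using p a(1) K(1) u_meas u_loc u_tail \<phi>_meas \<phi>_bounded \<phi>_supp by unfold_locales
  define G where "G \<epsilon> x = 2 * (LINT y:(UNIV - {y. (x, y) \<in> A \<epsilon>})|lebesgue. fractional_kernel p a u (x, y))"
    for \<epsilon> x
  have "integrable (lebesgue \<Otimes>\<^sub>M lebesgue) (\<lambda>z. fractional_kernel p a u z * (\<phi> (fst z) - \<phi> (snd z)))"
    using a(2) U u_gagliardo \<phi>_lip(2,1) by (rule weak_form.integrable_weak_form_integrand)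
  then have lim_truncated: "((\<lambda>\<epsilon>. \<integral>x. \<phi> x * G \<epsilon> x \<partial>lebesgue) \<longlongrightarrow>
      (\<integral>z. fractional_kernel p a u z * (\<phi> (fst z) - \<phi> (snd z)) \<partial>(lebesgue \<Otimes>\<^sub>M lebesgue))) (at_right 0)"
    unfolding G_def using A_nbhd A_meas A_sym A_haus by (rule weak_form.tendsto_integral_truncations)
  have "L1_loc_tendsto \<Omega> G f" using conv unfolding G_def a_def fractional_kernel_def by simp
  then have lim_tested: "((\<lambda>\<epsilon>. \<integral>x. \<phi> x * G \<epsilon> x \<partial>lebesgue) \<longlongrightarrow> (\<integral>x. \<phi> x * f x \<partial>lebesgue)) (at_right 0)"
    using f K \<phi>_meas \<phi>_bounded \<phi>_supp by (rule L1_loc_tendsto_tested)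
  have "(\<integral>z. fractional_kernel p a u z * (\<phi> (fst z) - \<phi> (snd z)) \<partial>(lebesgue \<Otimes>\<^sub>M lebesgue))
      = (\<integral>x. \<phi> x * f x \<partial>lebesgue)"
    using trivial_limit_at_right_real lim_truncated lim_tested by (rule tendsto_unique)
  moreover have "(LINT z|(lebesgue \<Otimes>\<^sub>M lebesgue).
            spow (u (fst z) - u (snd z)) (p - 1) * (\<phi> (fst z) - \<phi> (snd z))
              / norm (fst z - snd z) powr (real DIM('a) + p * s))
      = (\<integral>z. fractional_kernel p a u z * (\<phi> (fst z) - \<phi> (snd z)) \<partial>(lebesgue \<Otimes>\<^sub>M lebesgue))"
    unfolding a_def fractional_kernel_def by (simp add: times_divide_eq_left)
  moreover have "(\<integral>x. \<phi> x * f x \<partial>lebesgue) = (LINT x:\<Omega>|lebesgue. f x * \<phi> x)"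
    unfolding set_lebesgue_integral_def using K(2) \<phi>_supp
    by (intro Bochner_Integration.integral_cong) (auto simp: indicator_def)
  ultimately show ?thesis by simp
qed

end
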